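(* Let $\gamma$ be a regularly varying function near $0$ with index $\alpha\in(0,1]$. Then there exist constants $\mathsf{c}>0$ and $x_0\in(0,1)$ such that $$\int_0^{1/2}\gamma(xy)\frac{dy}{y\sqrt{\log(1/y)}}\le \mathsf{c}\,\gamma(x)\quad\text{for all }x\in[0,x_0].$$
   Context: $\gamma$ is a continuous increasing function near $0$ with $\lim_{x\downarrow0}\gamma(x)=0$. $\gamma$ is regularly varying near $0$ with index $\alpha$ if $\gamma(x)=x^\alpha L(x)$ for all $x\in(0,x_0)$ for some $x_0>0$, where $L:(0,x_0)\to[0,\infty)$ is slowly varying at $0$ in the sense of Karamata, i.e. $L(\lambda x)/L(x)\to1$ as $x\downarrow0$ for every $\lambda>0$. *)

theory Defs
  imports "HOL-Analysis.Analysis"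
begin

definition admissible_gauge :: "(real \<Rightarrow> real) \<Rightarrow> bool" where
  "admissible_gauge \<gamma> \<longleftrightarrow>
     (\<exists>\<delta>>0. continuous_on {0<..<\<delta>} \<gamma> \<and> mono_on {0<..<\<delta>} \<gamma>)
     \<and> (\<gamma> \<longlongrightarrow> 0) (at_right 0) \<and> \<gamma> 0 = 0"

definition slowly_varying_at0 :: "real \<Rightarrow> (real \<Rightarrow> real) \<Rightarrow> bool" where
  "slowly_varying_at0 x0 L \<longleftrightarrow>
     (\<forall>x\<in>{0<..<x0}. L x \<ge> 0) \<and>
     (\<forall>t>0. ((\<lambda>x. L (t * x) / L x) \<longlongrightarrow> 1) (at_right 0))"

definition regularly_varying_at0 :: "(real \<Rightarrow> real) \<Rightarrow> real \<Rightarrow> bool" where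
  "regularly_varying_at0 \<gamma> \<alpha> \<longleftrightarrow>
     (\<exists>x0>0. \<exists>L. slowly_varying_at0 x0 L \<and>
        (\<forall>x\<in>{0<..<x0}. \<gamma> x = x powr \<alpha> * L x))"

end

theory Submission
  imports Defs
begin

text \<open>Since \<open>\<alpha> > 0\<close> and \<open>L(z/2) / L(z) \<rightarrow> 1\<close>, halving the argument multiplies \<open>\<gamma>\<close>
  near \<open>0\<close> by at most a fixed factor \<open>\<rho> < 1\<close>, so \<open>\<gamma>(xy) \<le> \<rho>^n \<gamma>(x)\<close> for \<open>y \<le> 2^-n\<close>.
  On the dyadic piece \<open>(2^-(n+2), 2^-(n+1)]\<close> of \<open>(0, 1/2)\<close> the kernel \<open>1 / (y sqrt(ln(1/y)))\<close>
  is at most \<open>2^(n+2) / sqrt(ln 2)\<close>, so the integral is dominated by the geometric series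
  \<open>\<Sum>\<^sub>n \<rho>^n \<gamma>(x) / sqrt(ln 2)\<close>.\<close>

lemma regularly_varying_at0_contraction:
  assumes "regularly_varying_at0 \<gamma> \<alpha>" "0 < \<alpha>" "0 < t" "t < 1"
  obtains \<rho> b where "0 \<le> \<rho>" "\<rho> < 1" "0 < b"
    "\<And>z. 0 < z \<Longrightarrow> z \<le> b \<Longrightarrow> 0 \<le> \<gamma> z \<and> \<gamma> (t * z) \<le> \<rho> * \<gamma> z"
proof -
  obtain x0 L where x0: "x0 > 0" and L_nonneg: "\<forall>x\<in>{0<..<x0}. L x \<ge> 0"
    and L_ratio: "((\<lambda>x. L (t * x) / L x) \<longlongrightarrow> 1) (at_right 0)"
    and \<gamma>_eq: "\<forall>x\<in>{0<..<x0}. \<gamma> x = x powr \<alpha> * L x"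
    using assms(1,3) unfolding regularly_varying_at0_def slowly_varying_at0_def by blast
  define \<rho> where "\<rho> = (1 + t powr \<alpha>) / 2"
  define q where "q = \<rho> / t powr \<alpha>"
  have t_pow: "0 < t powr \<alpha>" "t powr \<alpha> < 1"
    using assms(2-4) powr_less_mono2[of \<alpha> t 1] by auto
  then have \<rho>: "0 \<le> \<rho>" "\<rho> < 1" "t powr \<alpha> < \<rho>" unfolding \<rho>_def by auto
  have "1 < q" using \<rho> t_pow unfolding q_def by (simp add: less_divide_eq)
  then have "eventually (\<lambda>x. 0 < L (t * x) / L x \<and> L (t * x) / L x < q) (at_right 0)"
    using order_tendstoD[OF L_ratio] by (intro eventually_conj) auto
  then obtain b0 where b0: "b0 > 0"
    and ratio: "\<And>x. 0 < x \<Longrightarrow> x < b0 \<Longrightarrow> 0 < L (t * x) / L x \<and> L (t * x) / L x < q"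
    by (auto simp: eventually_at_right_field)
  define b where "b = min b0 x0 / 2"
  have contract: "0 \<le> \<gamma> z \<and> \<gamma> (t * z) \<le> \<rho> * \<gamma> z" if z: "0 < z" "z \<le> b" for z
  proof -
    have "z < b0" "z < x0" using z b0 x0 unfolding b_def by auto
    moreover have "t * z < z" using z assms(4) by simp
    ultimately have z_lt: "z < b0" "z < x0" "t * z < x0" by linarith+
    have "L z \<noteq> 0" using ratio[of z] z z_lt by auto
    then have Lz: "L z > 0" using L_nonneg z z_lt by force
    have "L (t * z) \<le> q * L z" using ratio[of z] z z_lt Lz by (simp add: divide_less_eq)
    then have "\<gamma> (t * z) \<le> t powr \<alpha> * z powr \<alpha> * (q * L z)"
      using \<gamma>_eq z z_lt assms(3) by (simp add: powr_mult)
    also have "\<dots> = \<rho> * \<gamma> z" using \<gamma>_eq z z_lt t_pow unfolding q_def by simp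
    finally show ?thesis using \<gamma>_eq Lz z z_lt by simp
  qed
  have "0 < b" using b0 x0 unfolding b_def by simp
  show ?thesis by (rule that[OF \<rho>(1,2) \<open>0 < b\<close> contract])
qed

lemma contraction_iterate:
  fixes f :: "real \<Rightarrow> real"
  assumes "0 \<le> \<rho>" "0 < t" "t \<le> 1"
    and contract: "\<And>z. 0 < z \<Longrightarrow> z \<le> b \<Longrightarrow> f (t * z) \<le> \<rho> * f z"
    and "0 < z" "z \<le> b"
  shows "f (t ^ k * z) \<le> \<rho> ^ k * f z"
proof (induction k)
  case 0
  show ?case by simp
next
  case (Suc k)
  have "t ^ k * z \<le> z" using assms(2,3,5) by (simp add: mult_left_le_one_le power_le_one)
  then have "f (t * (t ^ k * z)) \<le> \<rho> * f (t ^ k * z)"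
    by (intro contract order_trans[OF _ assms(6)]) (use assms(2,5) in simp_all)
  also have "\<dots> \<le> \<rho> * (\<rho> ^ k * f z)" using Suc assms(1) by (rule mult_left_mono)
  finally show ?case by (simp add: mult.assoc)
qed

lemma dyadic_interval_cover:
  fixes y :: real
  assumes "0 < y" "y < 1/2"
  obtains n where "(1/2) ^ (n + 2) < y" "y \<le> (1/2) ^ (n + 1)"
proof -
  obtain k where k: "(1/2::real) ^ k < y" using real_arch_pow_inv[of y "1/2"] assms by auto
  define n where "n = (LEAST n. (1/2::real) ^ (n + 2) < y)"
  have lower: "(1/2::real) ^ (n + 2) < y" unfolding n_def
    by (rule LeastI[of _ k]) (rule le_less_trans[OF _ k], simp add: power_decreasing)
  have "y \<le> (1/2) ^ (n + 1)"
  proof (cases n)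
    case (Suc m)
    then have "\<not> (1/2::real) ^ (m + 2) < y" unfolding n_def by (metis lessI not_less_Least)
    then show ?thesis using Suc by simp
  qed (use assms in simp)
  with lower show ?thesis by (rule that)
qed

lemma nn_integral_dyadic_le:
  fixes f :: "real \<Rightarrow> ennreal" and a :: "nat \<Rightarrow> real"
  assumes bound: "\<And>n y. (1/2) ^ (n + 2) < y \<Longrightarrow> y \<le> (1/2) ^ (n + 1) \<Longrightarrow> f y \<le> ennreal (2 ^ (n + 2) * a n)"
    and a_nonneg: "\<And>n. 0 \<le> a n"
  shows "(\<integral>\<^sup>+ y. f y * indicator {0<..<1/2} y \<partial>lborel) \<le> (\<Sum>n. ennreal (a n))"
proof -
  define I where "I n = {(1/2::real) ^ (n + 2)<..(1/2) ^ (n + 1)}" for n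
  have "f y * indicator {0<..<1/2} y \<le> (\<Sum>n. ennreal (2 ^ (n + 2) * a n) * indicator (I n) y)" for y
  proof (cases "0 < y \<and> y < 1/2")
    case True
    then obtain n where "(1/2) ^ (n + 2) < y" "y \<le> (1/2) ^ (n + 1)"
      by (auto elim: dyadic_interval_cover)
    then have "f y * indicator {0<..<1/2} y \<le> ennreal (2 ^ (n + 2) * a n) * indicator (I n) y"
      using True bound by (simp add: I_def)
    also have "\<dots> \<le> (\<Sum>n. ennreal (2 ^ (n + 2) * a n) * indicator (I n) y)"
      using sum_le_suminf[OF summableI, of "{n}"] by simp
    finally show ?thesis .
  qed simp
  then have "(\<integral>\<^sup>+ y. f y * indicator {0<..<1/2} y \<partial>lborel)
      \<le> (\<integral>\<^sup>+ y. (\<Sum>n. ennreal (2 ^ (n + 2) * a n) * indicator (I n) y) \<partial>lborel)"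
    by (rule nn_integral_mono)
  also have "\<dots> = (\<Sum>n. ennreal (2 ^ (n + 2) * a n) * emeasure lborel (I n))"
    by (subst nn_integral_suminf) (auto simp: I_def nn_integral_cmult_indicator)
  also have "\<dots> = (\<Sum>n. ennreal (a n))"
  proof (rule suminf_cong)
    fix n
    have "emeasure lborel (I n) = ennreal ((1/2) ^ (n + 2))"
      by (simp add: I_def power_decreasing)
    then show "ennreal (2 ^ (n + 2) * a n) * emeasure lborel (I n) = ennreal (a n)"
      using a_nonneg by (simp add: ennreal_mult''[symmetric] power_one_over)
  qed
  finally show ?thesis .
qed

lemma kernel_dyadic_bound:
  fixes y :: real
  assumes "(1/2) ^ (n + 2) < y" "y \<le> 1/2"
  shows "1 / (y * sqrt (ln (1 / y))) \<le> 2 ^ (n + 2) / sqrt (ln 2)"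
proof -
  have y: "0 < y" by (rule le_less_trans[OF _ assms(1)]) simp
  have "1 / y < 2 ^ (n + 2)"
    using assms(1) y by (simp add: divide_less_eq power_one_over mult.commute)
  moreover have "sqrt (ln 2) \<le> sqrt (ln (1 / y))"
    using assms(2) y by (simp add: le_divide_eq)
  ultimately have "1 / y * (1 / sqrt (ln (1 / y))) \<le> 2 ^ (n + 2) * (1 / sqrt (ln 2))"
    using y assms(2) by (intro mult_mono frac_le) auto
  then show ?thesis by simp
qed

lemma dyadic_decay_of_contraction:
  fixes \<gamma> :: "real \<Rightarrow> real"
  assumes mono: "mono_on {0<..<\<delta>} \<gamma>" and "0 \<le> \<rho>"
    and contract: "\<And>z. 0 < z \<Longrightarrow> z \<le> b \<Longrightarrow> 0 \<le> \<gamma> z \<and> \<gamma> (1/2 * z) \<le> \<rho> * \<gamma> z"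
    and x: "0 < x" "x \<le> b" "x < \<delta>" and y: "0 < y" "y \<le> (1/2) ^ n"
  shows "0 \<le> \<gamma> (x * y) \<and> \<gamma> (x * y) \<le> \<rho> ^ n * \<gamma> x"
proof
  have xy_le: "x * y \<le> (1/2) ^ n * x" using x y by (simp add: mult.commute)
  have "(1/2) ^ n * x \<le> x" using x by (simp add: mult_left_le_one_le power_le_one)
  then have xy: "0 < x * y" "(1/2) ^ n * x < \<delta>" "x * y \<le> b"
    using xy_le x y by (simp, linarith, linarith)
  then show "0 \<le> \<gamma> (x * y)" using contract by simp
  have "\<gamma> (x * y) \<le> \<gamma> ((1/2) ^ n * x)"
    using xy xy_le by (intro mono_onD[OF mono]) auto
  also have "\<dots> \<le> \<rho> ^ n * \<gamma> x"
    using contract x by (intro contraction_iterate[OF \<open>0 \<le> \<rho>\<close>]) auto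
  finally show "\<gamma> (x * y) \<le> \<rho> ^ n * \<gamma> x" .
qed

lemma nn_integral_kernel_le_of_contraction:
  fixes \<gamma> :: "real \<Rightarrow> real"
  assumes mono: "mono_on {0<..<\<delta>} \<gamma>" and \<rho>: "0 \<le> \<rho>" "\<rho> < 1"
    and contract: "\<And>z. 0 < z \<Longrightarrow> z \<le> b \<Longrightarrow> 0 \<le> \<gamma> z \<and> \<gamma> (1/2 * z) \<le> \<rho> * \<gamma> z"
    and x: "0 < x" "x \<le> b" "x < \<delta>"
  shows "(\<integral>\<^sup>+ y. ennreal (\<gamma> (x * y) / (y * sqrt (ln (1 / y)))) * indicator {0<..<1/2} y \<partial>lborel)
    \<le> ennreal (\<gamma> x / ((1 - \<rho>) * sqrt (ln 2)))"
proof -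
  have \<gamma>x: "0 \<le> \<gamma> x" using contract x by simp
  have "\<gamma> (x * y) / (y * sqrt (ln (1 / y))) \<le> 2 ^ (n + 2) * (\<rho> ^ n * (\<gamma> x / sqrt (ln 2)))"
    if y: "(1/2) ^ (n + 2) < y" "y \<le> (1/2) ^ (n + 1)" for n y
  proof -
    have "0 < y" by (rule le_less_trans[OF _ y(1)]) simp
    moreover have "y \<le> (1/2) ^ n" using y(2) \<open>0 < y\<close> by simp
    ultimately have "0 \<le> \<gamma> (x * y)" "\<gamma> (x * y) \<le> \<rho> ^ n * \<gamma> x"
      using dyadic_decay_of_contraction[OF mono \<rho>(1) contract x] by auto
    moreover have "y \<le> 1/2" using order_trans[OF y(2), of "1/2"] by (simp add: power_le_one)
    then have "0 \<le> 1 / (y * sqrt (ln (1 / y)))" using \<open>0 < y\<close> by (simp add: le_divide_eq)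
    moreover have "1 / (y * sqrt (ln (1 / y))) \<le> 2 ^ (n + 2) / sqrt (ln 2)"
      using y(1) \<open>y \<le> 1/2\<close> by (rule kernel_dyadic_bound)
    ultimately have "\<gamma> (x * y) * (1 / (y * sqrt (ln (1 / y))))
        \<le> \<rho> ^ n * \<gamma> x * (2 ^ (n + 2) / sqrt (ln 2))"
      by (intro mult_mono) auto
    then show ?thesis by (simp add: field_simps)
  qed
  then have "(\<integral>\<^sup>+ y. ennreal (\<gamma> (x * y) / (y * sqrt (ln (1 / y)))) * indicator {0<..<1/2} y \<partial>lborel)
      \<le> (\<Sum>n. ennreal (\<rho> ^ n * (\<gamma> x / sqrt (ln 2))))"
    using \<rho> \<gamma>x by (intro nn_integral_dyadic_le ennreal_leI) auto
  also have "\<dots> = ennreal (\<gamma> x / ((1 - \<rho>) * sqrt (ln 2)))"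
    using sums_mult2[OF geometric_sums, of \<rho> "\<gamma> x / sqrt (ln 2)"] \<rho> \<gamma>x
    by (intro suminf_ennreal_eq) auto
  finally show ?thesis .
qed

theorem proposition2p8:
  fixes \<gamma> :: "real \<Rightarrow> real" and \<alpha> :: real
  assumes "admissible_gauge \<gamma>"
    and "regularly_varying_at0 \<gamma> \<alpha>"
    and "0 < \<alpha>" and "\<alpha> \<le> 1"
  shows "\<exists>c>0. \<exists>x0\<in>{0<..<1}. \<forall>x\<in>{0..x0}.
     (\<integral>\<^sup>+ y. ennreal (\<gamma> (x * y) / (y * sqrt (ln (1 / y))))
                * indicator {0<..<1/2} y \<partial>lborel)
       \<le> ennreal (c * \<gamma> x)"
proof -
  obtain \<delta> where \<delta>: "\<delta> > 0" "mono_on {0<..<\<delta>} \<gamma>" and "\<gamma> 0 = 0"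
    using assms(1) unfolding admissible_gauge_def by blast
  obtain \<rho> b where \<rho>: "0 \<le> \<rho>" "\<rho> < 1" and "0 < b"
    and contract: "\<And>z. 0 < z \<Longrightarrow> z \<le> b \<Longrightarrow> 0 \<le> \<gamma> z \<and> \<gamma> (1/2 * z) \<le> \<rho> * \<gamma> z"
    by (rule regularly_varying_at0_contraction[OF assms(2,3), of "1/2"]) auto
  define x0 where "x0 = min (1/2) (min b (\<delta>/2))"
  define c where "c = 1 / ((1 - \<rho>) * sqrt (ln 2))"
  have x0: "0 < x0" "x0 < 1" "x0 \<le> b" "x0 < \<delta>"
    using \<open>0 < b\<close> \<delta> unfolding x0_def by auto
  have "0 < c" using \<rho> unfolding c_def by simp
  moreover have "(\<integral>\<^sup>+ y. ennreal (\<gamma> (x * y) / (y * sqrt (ln (1 / y))))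
      * indicator {0<..<1/2} y \<partial>lborel) \<le> ennreal (c * \<gamma> x)" if "x \<in> {0..x0}" for x
  proof (cases "x = 0")
    case False
    then have "0 < x" "x \<le> b" "x < \<delta>" using that x0 by auto
    then show ?thesis
      using nn_integral_kernel_le_of_contraction[OF \<delta>(2) \<rho> contract] unfolding c_def by simp
  qed (simp add: \<open>\<gamma> 0 = 0\<close>)
  ultimately show ?thesis using x0(1,2) by (intro exI[of _ c] conjI bexI[of _ x0] ballI) auto
qed

end
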